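(* Let $N_1,\dots,N_R$ be produced by the tree-based resampling algorithm described in the context with probabilities $\pi_1,\dots,\pi_R$ and $N$ particles. Then for every $\varepsilon>0$, $$\sup_{A\subset\{1,\dots,R\}}\mathbf P\Big[\Big|\sum_{j\in A}(N_j-N\pi_j)\Big|\ge\varepsilon\Big]\le2\exp(-4\varepsilon^2/R).$$
   Context: Tree-based resampling: given probabilities $\pi_1,\dots,\pi_R$ and $N\in\mathbb N$, fix an arbitrary binary tree with $R$ leaves labelled $1,\dots,R$; identify each node $\alpha$ with the set of leaves below it and put $\mu_\alpha=N\sum_{j\in\alpha}\pi_j$. $N$ particles start at the root and are propagated down: for each node $\alpha$ the number $N_\alpha$ of particles passing through $\alpha$ satisfies $N_\alpha\in\{\lfloor\mu_\alpha\rfloor,\lfloor\mu_\alpha\rfloor+1\}$ and $\mathbf E[N_\alpha]=\mu_\alpha$; at each internal node the split of the arriving particles between its two children is either deterministic or a random choice between two possibilities with given probabilities, and the random choices at different nodes are made independently. $N_j$ is the number of particles ending at leaf $j$. *)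

theory Defs
  imports "HOL-Probability.Probability"
begin

text \<open>A full binary tree whose leaves carry labels and whose internal nodes carry
  the splitting rule: given the number n of particles arriving at the node,
  a (random) number of particles sent to the left child; the rest go right.\<close>
datatype rtree = Leaf nat | Node "nat \<Rightarrow> nat pmf" rtree rtree

fun leaves :: "rtree \<Rightarrow> nat list" where
  "leaves (Leaf j) = [j]"
| "leaves (Node f l r) = leaves l @ leaves r"

fun subtrees :: "rtree \<Rightarrow> rtree set" where
  "subtrees (Leaf j) = {Leaf j}"
| "subtrees (Node f l r) = insert (Node f l r) (subtrees l \<union> subtrees r)"

fun resample :: "rtree \<Rightarrow> nat \<Rightarrow> (nat \<Rightarrow> nat) pmf" where
  "resample (Leaf j) n = return_pmf (\<lambda>i. if i = j then n else 0)"
| "resample (Node f l r) n =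
     do { k \<leftarrow> f n; a \<leftarrow> resample l k; b \<leftarrow> resample r (n - k);
          return_pmf (\<lambda>i. a i + b i) }"

definition mu :: "nat \<Rightarrow> (nat \<Rightarrow> real) \<Rightarrow> rtree \<Rightarrow> real" where
  "mu N p s = real N * (\<Sum>j\<in>set (leaves s). p j)"

end

theory Submission
  imports Defs
begin

text \<open>
  Every count that can occur at a node lies in {floor mu, floor mu + 1}, and the root
  count N is conserved.  By induction over the tree,
  E exp(theta * sum_{j in B} N_j) <= exp(theta * E sum_{j in B} N_j + theta^2 |B| / 8):
  at a leaf this is Hoeffding's lemma for a variable taking two consecutive values; at an
  internal node the numbers of particles sent to the two children are negatively correlated,
  because their sum also takes only two consecutive values, while the moment generating
  functions of the two subtrees are monotone in the same direction in the number of arriving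
  particles.  Chernoff's bound then gives the tail 2 exp(-2 eps^2 / |B|).  Since the centred
  counts sum to zero over all leaves, A can be replaced by its complement, so that |B| <= R/2.
\<close>

abbreviation E :: "'a pmf \<Rightarrow> ('a \<Rightarrow> real) \<Rightarrow> real" where
  "E P h \<equiv> measure_pmf.expectation P h"

lemma expectation_cong_pmf: "(\<And>x. x \<in> set_pmf P \<Longrightarrow> f x = g x) \<Longrightarrow> E P f = E P g"
  by (rule integral_cong_AE) (auto simp: AE_measure_pmf_iff)

lemma finite_set_bind_pmf:
  "finite (set_pmf P) \<Longrightarrow> (\<And>x. x \<in> set_pmf P \<Longrightarrow> finite (set_pmf (Q x))) \<Longrightarrow>
    finite (set_pmf (P \<bind> Q))"
  unfolding set_bind_pmf by (rule finite_UN_I)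

lemma expectation_bind_pmf_finite:
  assumes "finite (set_pmf P)" "\<And>x. x \<in> set_pmf P \<Longrightarrow> finite (set_pmf (Q x))"
  shows "E (P \<bind> Q) h = E P (\<lambda>x. E (Q x) h)"
proof -
  have "E (P \<bind> Q) h = (\<Sum>a\<in>set_pmf P. pmf P a *\<^sub>R E (Q a) h)"
    by (rule pmf_expectation_bind) (use assms in auto)
  also have "\<dots> = E P (\<lambda>x. E (Q x) h)"
    using integral_measure_pmf_real[OF assms(1), of P "\<lambda>x. E (Q x) h"] by (simp add: mult.commute)
  finally show ?thesis .
qed

lemma mult_diff_expectation_nonneg:
  assumes "finite (set_pmf P)" "finite (set_pmf Q)"
    and "\<And>a b. a \<in> set_pmf P \<Longrightarrow> b \<in> set_pmf Q \<Longrightarrow> 0 \<le> c * (v b - u a)"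
  shows "0 \<le> c * (E Q v - E P u)"
proof -
  have "0 \<le> E Q (\<lambda>b. E P (\<lambda>a. c * (v b - u a)))"
    using assms(3) by (intro integral_nonneg_AE AE_pmfI) auto
  also have "\<dots> = c * (E Q v - E P u)"
    using assms(1,2) by (simp add: integrable_measure_pmf_finite right_diff_distrib)
  finally show ?thesis .
qed

lemma eq_lower_bound_if_expectation_eq:
  fixes P :: "'a pmf" and X :: "'a \<Rightarrow> real"
  assumes range: "\<And>x. x \<in> set_pmf P \<Longrightarrow> X x \<in> {c..d}" and mean: "E P X = c"
    and x: "x \<in> set_pmf P"
  shows "X x = c"
proof -
  have "integrable (measure_pmf P) X"
    by (rule measure_pmf.integrable_const_bound[where B = "max \<bar>c\<bar> \<bar>d\<bar>"])
       (auto intro!: AE_pmfI dest!: range)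
  then have "integrable (measure_pmf P) (\<lambda>x. X x - c)" "E P (\<lambda>x. X x - c) = 0"
    using mean by simp_all
  then have "AE x in measure_pmf P. X x - c = 0"
    using range by (subst integral_nonneg_eq_0_iff_AE[symmetric]) (auto intro: AE_pmfI)
  then show ?thesis using x by (simp add: AE_measure_pmf_iff)
qed

lemma Hoeffding_lemma_pmf:
  fixes P :: "'a pmf" and X :: "'a \<Rightarrow> real"
  assumes fin: "finite (set_pmf P)" and X: "\<And>x. x \<in> set_pmf P \<Longrightarrow> X x \<in> {a..b}"
  shows "E P (\<lambda>x. exp (l * X x)) \<le> exp (l * E P X + l\<^sup>2 * (b - a)\<^sup>2 / 8)"
proof -
  have pos: "E P (\<lambda>x. exp (s * Y x)) \<le> exp (s * E P Y + s\<^sup>2 * (d - c)\<^sup>2 / 8)"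
    if s: "s > 0" and Y: "\<And>x. x \<in> set_pmf P \<Longrightarrow> Y x \<in> {c..d}" for s Y c d
  proof -
    interpret interval_bounded_random_variable "measure_pmf P" Y c d
    proof
      show "AE x in measure_pmf P. Y x \<in> {c..d}" using Y by (rule AE_pmfI)
    qed simp
    have "ennreal (E P (\<lambda>x. exp (s * (Y x - E P Y)))) = nn_integral P (\<lambda>x. exp (s * (Y x - E P Y)))"
      by (rule nn_integral_eq_integral[symmetric]) (auto intro: integrable_measure_pmf_finite fin)
    also have "\<dots> \<le> exp (s\<^sup>2 * (d - c)\<^sup>2 / 8)"
      by (rule Hoeffdings_lemma_nn_integral[OF s])
    finally have centered: "E P (\<lambda>x. exp (s * (Y x - E P Y))) \<le> exp (s\<^sup>2 * (d - c)\<^sup>2 / 8)"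
      by (simp add: ennreal_le_iff)
    have "E P (\<lambda>x. exp (s * Y x)) = E P (\<lambda>x. exp (s * (Y x - E P Y)) * exp (s * E P Y))"
      by (simp add: exp_add[symmetric] algebra_simps)
    also have "\<dots> = E P (\<lambda>x. exp (s * (Y x - E P Y))) * exp (s * E P Y)"
      by (rule integral_mult_left_zero)
    also have "\<dots> \<le> exp (s\<^sup>2 * (d - c)\<^sup>2 / 8) * exp (s * E P Y)"
      by (rule mult_right_mono[OF centered]) simp
    finally show ?thesis by (simp add: exp_add mult.commute)
  qed
  consider "l > 0" | "l < 0" | "l = 0" by linarith
  then show ?thesis
  proof cases
    case 1
    then show ?thesis using pos X by blast
  next
    case 2
    have "E P (\<lambda>x. exp ((- l) * (- X x))) \<le> exp ((- l) * E P (\<lambda>x. - X x) + (- l)\<^sup>2 * (- a - - b)\<^sup>2 / 8)"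
      using 2 X by (intro pos) auto
    moreover have "(- a - - b)\<^sup>2 = (b - a)\<^sup>2" by (simp add: power2_commute)
    ultimately show ?thesis by simp
  qed simp
qed

lemma expectation_mult_le_two_by_two:
  fixes J :: "('a \<times> 'b) pmf" and g :: "'a \<Rightarrow> real" and h :: "'b \<Rightarrow> real"
  assumes "x \<noteq> x'" "y \<noteq> y'" and supp: "set_pmf J \<subseteq> {x, x'} \<times> {y, y'}"
    and diag: "(x, y) \<notin> set_pmf J \<or> (x', y') \<notin> set_pmf J"
    and comono: "(x', y) \<in> set_pmf J \<Longrightarrow> (x, y') \<in> set_pmf J \<Longrightarrow>
      0 \<le> (g x' - g x) * (h y' - h y)"
  shows "E J (\<lambda>q. g (fst q) * h (snd q)) \<le> E J (\<lambda>q. g (fst q)) * E J (\<lambda>q. h (snd q))"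
proof -
  define P00 P01 P10 P11
    where "P00 = pmf J (x, y)" and "P01 = pmf J (x, y')"
      and "P10 = pmf J (x', y)" and "P11 = pmf J (x', y')"
  have expectation: "E J u = u (x, y) * P00 + u (x, y') * P01 + u (x', y) * P10 + u (x', y') * P11"
    for u :: "'a \<times> 'b \<Rightarrow> real"
    using assms(1,2) supp
    by (subst integral_measure_pmf_real[of "{x, x'} \<times> {y, y'}"])
       (auto simp: P00_def P01_def P10_def P11_def)
  have P00: "P00 = 1 - P01 - P10 - P11"
    using expectation[of "\<lambda>_. 1"] by simp
  have "P00 * P11 = 0"
    using diag by (auto simp: P00_def P11_def set_pmf_iff)
  moreover have "P10 * P01 = 0 \<or> 0 \<le> (g x' - g x) * (h y' - h y)"
    using comono by (auto simp: P10_def P01_def set_pmf_iff)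
  moreover have "0 \<le> P10 * P01" by (simp add: P10_def P01_def)
  ultimately have "(g x' - g x) * (h y' - h y) * (P00 * P11 - P10 * P01) \<le> 0"
    by (auto simp: mult_nonneg_nonneg)
  moreover have "E J (\<lambda>q. g (fst q) * h (snd q)) - E J (\<lambda>q. g (fst q)) * E J (\<lambda>q. h (snd q))
      = (g x' - g x) * (h y' - h y) * (P00 * P11 - P10 * P01)"
    unfolding expectation P00 by (simp add: algebra_simps)
  ultimately show ?thesis by linarith
qed

lemma prob_ge_le_of_mgf_le:
  fixes P :: "'a pmf" and Y :: "'a \<Rightarrow> real"
  assumes fin: "finite (set_pmf P)" and c: "c > 0" and \<epsilon>: "\<epsilon> > 0"
    and mgf: "\<And>l. E P (\<lambda>x. exp (l * Y x)) \<le> exp (l\<^sup>2 * c / 8)"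
  shows "measure_pmf.prob P {x. \<epsilon> \<le> Y x} \<le> exp (- 2 * \<epsilon>\<^sup>2 / c)"
proof -
  define l where "l = 4 * \<epsilon> / c"
  have l: "l > 0" using c \<epsilon> by (simp add: l_def)
  have "measure_pmf.prob P {x \<in> space (measure_pmf P). \<epsilon> \<le> Y x}
      \<le> exp (- l * \<epsilon>) * (\<integral>x\<in>space (measure_pmf P). exp (l * Y x) \<partial>measure_pmf P)"
    by (rule measure_pmf.Chernoff_ineq_ge[OF l])
       (auto intro: integrable_measure_pmf_finite[OF fin] simp: set_integrable_def)
  also have "\<dots> \<le> exp (- l * \<epsilon>) * exp (l\<^sup>2 * c / 8)"
    using mgf[of l] by (simp add: set_lebesgue_integral_def)
  also have "\<dots> = exp (- 2 * \<epsilon>\<^sup>2 / c)"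
    using c by (simp add: l_def exp_add[symmetric] field_simps power2_eq_square)
  finally show ?thesis by simp
qed

lemma prob_abs_ge_le_of_mgf_le:
  fixes P :: "'a pmf" and Y :: "'a \<Rightarrow> real"
  assumes fin: "finite (set_pmf P)" and c: "c > 0" and \<epsilon>: "\<epsilon> > 0"
    and mgf: "\<And>l. E P (\<lambda>x. exp (l * Y x)) \<le> exp (l\<^sup>2 * c / 8)"
  shows "measure_pmf.prob P {x. \<epsilon> \<le> \<bar>Y x\<bar>} \<le> 2 * exp (- 2 * \<epsilon>\<^sup>2 / c)"
proof -
  have "{x. \<epsilon> \<le> \<bar>Y x\<bar>} = {x. \<epsilon> \<le> Y x} \<union> {x. \<epsilon> \<le> - Y x}" by auto
  then have "measure_pmf.prob P {x. \<epsilon> \<le> \<bar>Y x\<bar>}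
      \<le> measure_pmf.prob P {x. \<epsilon> \<le> Y x} + measure_pmf.prob P {x. \<epsilon> \<le> - Y x}"
    by (simp add: measure_Un_le)
  also have "\<dots> \<le> exp (- 2 * \<epsilon>\<^sup>2 / c) + exp (- 2 * \<epsilon>\<^sup>2 / c)"
  proof (intro add_mono prob_ge_le_of_mgf_le[OF fin c \<epsilon>] mgf)
    show "E P (\<lambda>x. exp (l * - Y x)) \<le> exp (l\<^sup>2 * c / 8)" for l
      using mgf[of "- l"] by simp
  qed
  finally show ?thesis by simp
qed

lemma abs_sum_eq_abs_sum_compl:
  fixes x :: "'a \<Rightarrow> real"
  assumes "finite L" "A \<subseteq> L" "(\<Sum>j\<in>L. x j) = 0"
  shows "\<bar>\<Sum>j\<in>A. x j\<bar> = \<bar>\<Sum>j\<in>L - A. x j\<bar>"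
  using assms sum.subset_diff[of A L x] by simp

lemma small_side_exists: "finite L \<Longrightarrow> A \<subseteq> L \<Longrightarrow> \<exists>B\<in>{A, L - A}. 2 * card B \<le> card L"
  by (cases "2 * card A \<le> card L") (auto simp: card_Diff_subset finite_subset)

lemma resample_NodeE:
  assumes "Nv \<in> set_pmf (resample (Node f l r) n)"
  obtains k a b where "k \<in> set_pmf (f n)" "a \<in> set_pmf (resample l k)"
    "b \<in> set_pmf (resample r (n - k))" "Nv = (\<lambda>i. a i + b i)"
  using assms by (auto simp: set_bind_pmf)

lemma resample_NodeI:
  "k \<in> set_pmf (f n) \<Longrightarrow> a \<in> set_pmf (resample l k) \<Longrightarrow> b \<in> set_pmf (resample r (n - k)) \<Longrightarrow>
    (\<lambda>i. a i + b i) \<in> set_pmf (resample (Node f l r) n)"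
  by (auto simp: set_bind_pmf)

lemma resample_outside_leaves:
  "Nv \<in> set_pmf (resample s n) \<Longrightarrow> j \<notin> set (leaves s) \<Longrightarrow> Nv j = 0"
proof (induction s arbitrary: n Nv)
  case (Node f l r)
  then show ?case by (auto elim: resample_NodeE)
qed auto

lemma sum_resample_outside_leaves:
  "Nv \<in> set_pmf (resample s n) \<Longrightarrow> S \<inter> set (leaves s) = {} \<Longrightarrow> (\<Sum>j\<in>S. Nv j) = 0"
  by (auto intro: sum.neutral resample_outside_leaves)

lemma leaves_subtree_subset: "s' \<in> subtrees s \<Longrightarrow> set (leaves s') \<subseteq> set (leaves s)"
  by (induction s) auto

lemma subtrees_refl: "s \<in> subtrees s"
  by (cases s) auto

lemma Leaf_in_subtrees: "j \<in> set (leaves s) \<Longrightarrow> Leaf j \<in> subtrees s"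
  by (induction s) auto

lemma sum_leaves_Node:
  assumes "distinct (leaves (Node f l r))"
    and "a \<in> set_pmf (resample l k)" "b \<in> set_pmf (resample r m)"
  shows "(\<Sum>j\<in>set (leaves (Node f l r)). a j + b j) = (\<Sum>j\<in>set (leaves l). a j) + (\<Sum>j\<in>set (leaves r). b j)"
proof -
  have disjoint: "set (leaves l) \<inter> set (leaves r) = {}" using assms(1) by auto
  then have "(\<Sum>j\<in>set (leaves (Node f l r)). a j + b j)
      = (\<Sum>j\<in>set (leaves l). a j + b j) + (\<Sum>j\<in>set (leaves r). a j + b j)"
    by (simp add: sum.union_disjoint)
  also have "\<dots> = (\<Sum>j\<in>set (leaves l). a j) + (\<Sum>j\<in>set (leaves r). b j)"
    using disjoint sum_resample_outside_leaves[OF assms(2)] sum_resample_outside_leaves[OF assms(3)]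
    by (simp add: sum.distrib Int_commute)
  finally show ?thesis .
qed

lemma resample_total_ge:
  "distinct (leaves s) \<Longrightarrow> Nv \<in> set_pmf (resample s n) \<Longrightarrow> n \<le> (\<Sum>j\<in>set (leaves s). Nv j)"
proof (induction s arbitrary: n Nv)
  case (Node f l r)
  from Node.prems(2) obtain k a b where split: "k \<in> set_pmf (f n)" "a \<in> set_pmf (resample l k)"
    "b \<in> set_pmf (resample r (n - k))" and Nv: "Nv = (\<lambda>i. a i + b i)"
    by (rule resample_NodeE)
  have "k \<le> (\<Sum>j\<in>set (leaves l). a j)" "n - k \<le> (\<Sum>j\<in>set (leaves r). b j)"
    using Node split by auto
  then show ?case
    unfolding Nv sum_leaves_Node[OF Node.prems(1) split(2,3)] by linarith
qed auto

definition mu_floor :: "nat \<Rightarrow> (nat \<Rightarrow> real) \<Rightarrow> rtree \<Rightarrow> nat" where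
  "mu_floor N p s = nat \<lfloor>mu N p s\<rfloor>"

definition counts_bounded :: "nat \<Rightarrow> (nat \<Rightarrow> real) \<Rightarrow> rtree \<Rightarrow> (nat \<Rightarrow> nat) \<Rightarrow> bool" where
  "counts_bounded N p s Nv \<longleftrightarrow>
     (\<forall>s'\<in>subtrees s. (\<Sum>j\<in>set (leaves s'). Nv j) \<in> {mu_floor N p s', mu_floor N p s' + 1})"

text \<open>Unlike the hypothesis on the counts of a run from the root, admissibility is a
  property of a node and of the number of particles arriving there, which makes the moment
  bound provable by induction over the tree.\<close>
fun admissible :: "nat \<Rightarrow> (nat \<Rightarrow> real) \<Rightarrow> rtree \<Rightarrow> nat \<Rightarrow> bool" where
  "admissible N p (Leaf j) n \<longleftrightarrow> n \<in> {mu_floor N p (Leaf j), mu_floor N p (Leaf j) + 1}"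
| "admissible N p (Node f l r) n \<longleftrightarrow>
     n \<in> {mu_floor N p (Node f l r), mu_floor N p (Node f l r) + 1} \<and>
     (\<forall>k\<in>set_pmf (f n). k \<le> n \<and> admissible N p l k \<and> admissible N p r (n - k))"

lemma admissible_range: "admissible N p s n \<Longrightarrow> n \<in> {mu_floor N p s, mu_floor N p s + 1}"
  by (cases s) auto

lemma counts_bounded_Node:
  assumes "distinct (leaves (Node f l r))"
    and "a \<in> set_pmf (resample l k)" "b \<in> set_pmf (resample r m)"
    and "counts_bounded N p (Node f l r) (\<lambda>i. a i + b i)"
  shows "counts_bounded N p l a" "counts_bounded N p r b"
proof -
  have disjoint: "set (leaves l) \<inter> set (leaves r) = {}" using assms(1) by auto
  show "counts_bounded N p l a"
    unfolding counts_bounded_def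
  proof
    fix s' assume s': "s' \<in> subtrees l"
    then have "set (leaves s') \<inter> set (leaves r) = {}" using leaves_subtree_subset disjoint by blast
    then have "(\<Sum>j\<in>set (leaves s'). a j + b j) = (\<Sum>j\<in>set (leaves s'). a j)"
      using sum_resample_outside_leaves[OF assms(3)] by (simp add: sum.distrib)
    moreover have "s' \<in> subtrees (Node f l r)" using s' by simp
    ultimately show "(\<Sum>j\<in>set (leaves s'). a j) \<in> {mu_floor N p s', mu_floor N p s' + 1}"
      using assms(4) unfolding counts_bounded_def by metis
  qed
  show "counts_bounded N p r b"
    unfolding counts_bounded_def
  proof
    fix s' assume s': "s' \<in> subtrees r"
    then have "set (leaves s') \<inter> set (leaves l) = {}" using leaves_subtree_subset disjoint by blast
    then have "(\<Sum>j\<in>set (leaves s'). a j + b j) = (\<Sum>j\<in>set (leaves s'). b j)"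
      using sum_resample_outside_leaves[OF assms(2)] by (simp add: sum.distrib)
    moreover have "s' \<in> subtrees (Node f l r)" using s' by simp
    ultimately show "(\<Sum>j\<in>set (leaves s'). b j) \<in> {mu_floor N p s', mu_floor N p s' + 1}"
      using assms(4) unfolding counts_bounded_def by metis
  qed
qed

lemma resample_Node_children_conserving:
  assumes "distinct (leaves (Node f l r))"
    and node: "\<And>Nv. Nv \<in> set_pmf (resample (Node f l r) n) \<Longrightarrow>
      (\<Sum>j\<in>set (leaves (Node f l r)). Nv j) = n \<and> counts_bounded N p (Node f l r) Nv"
    and "k \<in> set_pmf (f n)" "a \<in> set_pmf (resample l k)" "b \<in> set_pmf (resample r (n - k))"
  shows "(\<Sum>j\<in>set (leaves l). a j) + (\<Sum>j\<in>set (leaves r). b j) = n \<and>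
    counts_bounded N p l a \<and> counts_bounded N p r b"
proof -
  have "(\<lambda>i. a i + b i) \<in> set_pmf (resample (Node f l r) n)" using assms(3-5) by (rule resample_NodeI)
  then show ?thesis
    using node sum_leaves_Node[OF assms(1,4,5)] counts_bounded_Node[OF assms(1,4,5)] by auto
qed

lemma admissible_if_conserving:
  assumes "distinct (leaves s)"
    and "\<And>Nv. Nv \<in> set_pmf (resample s n) \<Longrightarrow>
      (\<Sum>j\<in>set (leaves s). Nv j) = n \<and> counts_bounded N p s Nv"
  shows "admissible N p s n"
  using assms
proof (induction s arbitrary: n)
  case (Leaf j)
  have "(\<lambda>i. if i = j then n else 0) \<in> set_pmf (resample (Leaf j) n)" by simp
  then show ?case using Leaf.prems(2) by (fastforce simp: counts_bounded_def)
next
  case (Node f l r)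
  have dist_l: "distinct (leaves l)" and dist_r: "distinct (leaves r)" using Node.prems(1) by auto
  obtain Nv where "Nv \<in> set_pmf (resample (Node f l r) n)" by (meson ex_in_conv set_pmf_not_empty)
  then have "n \<in> {mu_floor N p (Node f l r), mu_floor N p (Node f l r) + 1}"
    using Node.prems(2) by (force simp: counts_bounded_def)
  moreover have "k \<le> n \<and> admissible N p l k \<and> admissible N p r (n - k)" if k: "k \<in> set_pmf (f n)" for k
  proof -
    have children: "(\<Sum>j\<in>set (leaves l). a j) + (\<Sum>j\<in>set (leaves r). b j) = n \<and>
        counts_bounded N p l a \<and> counts_bounded N p r b"
      if "a \<in> set_pmf (resample l k)" "b \<in> set_pmf (resample r (n - k))" for a b
      by (rule resample_Node_children_conserving[OF Node.prems(1) _ k that]) (fact Node.prems(2))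
    obtain a0 b0 where a0: "a0 \<in> set_pmf (resample l k)" and b0: "b0 \<in> set_pmf (resample r (n - k))"
      by (meson ex_in_conv set_pmf_not_empty)
    have "k \<le> n" using children[OF a0 b0] resample_total_ge[OF dist_l a0] by linarith
    moreover have "admissible N p l k"
    proof (rule Node.IH(1)[OF dist_l])
      fix a assume a: "a \<in> set_pmf (resample l k)"
      show "(\<Sum>j\<in>set (leaves l). a j) = k \<and> counts_bounded N p l a"
        using children[OF a b0] resample_total_ge[OF dist_l a] resample_total_ge[OF dist_r b0] \<open>k \<le> n\<close>
        by linarith
    qed
    moreover have "admissible N p r (n - k)"
    proof (rule Node.IH(2)[OF dist_r])
      fix b assume b: "b \<in> set_pmf (resample r (n - k))"
      show "(\<Sum>j\<in>set (leaves r). b j) = n - k \<and> counts_bounded N p r b"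
        using children[OF a0 b] resample_total_ge[OF dist_l a0] resample_total_ge[OF dist_r b] \<open>k \<le> n\<close>
        by linarith
    qed
    ultimately show ?thesis by blast
  qed
  ultimately show ?case by simp
qed

lemma finite_set_pmf_split: "admissible N p (Node f l r) n \<Longrightarrow> finite (set_pmf (f n))"
  by (rule finite_subset[of _ "{..n}"]) auto

lemma finite_set_pmf_resample: "admissible N p s n \<Longrightarrow> finite (set_pmf (resample s n))"
proof (induction s arbitrary: n)
  case (Node f l r)
  have "finite (set_pmf (f n))" using Node.prems by (rule finite_set_pmf_split)
  moreover have "admissible N p l k" "admissible N p r (n - k)" if "k \<in> set_pmf (f n)" for k
    using Node.prems that by auto
  ultimately show ?case by (auto intro!: finite_set_bind_pmf Node.IH)
qed simp

lemma finite_set_pmf_if_admissible: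
  assumes "\<And>n. n \<in> set_pmf D \<Longrightarrow> admissible N p s n"
  shows "finite (set_pmf D)"
proof (rule finite_subset)
  show "set_pmf D \<subseteq> {mu_floor N p s, mu_floor N p s + 1}" using assms admissible_range by blast
qed simp

lemma expectation_resample_Node:
  assumes "admissible N p (Node f l r) n"
  shows "E (resample (Node f l r) n) h =
    E (f n) (\<lambda>k. E (resample l k) (\<lambda>a. E (resample r (n - k)) (\<lambda>b. h (\<lambda>i. a i + b i))))"
proof -
  have adm: "admissible N p l k" "admissible N p r (n - k)" if "k \<in> set_pmf (f n)" for k
    using assms that by auto
  have add: "resample r (n - k) \<bind> (\<lambda>b. return_pmf (\<lambda>i. a i + b i)) =
      map_pmf (\<lambda>b i. a i + b i) (resample r (n - k))" for k a
    by (simp add: map_pmf_def)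
  have "E (resample (Node f l r) n) h =
      E (f n) (\<lambda>k. E (resample l k \<bind> (\<lambda>a. map_pmf (\<lambda>b i. a i + b i) (resample r (n - k)))) h)"
    unfolding resample.simps add
    using finite_set_pmf_split[OF assms] adm
    by (intro expectation_bind_pmf_finite finite_set_bind_pmf) (auto intro: finite_set_pmf_resample)
  also have "\<dots> = E (f n) (\<lambda>k. E (resample l k) (\<lambda>a. E (resample r (n - k)) (\<lambda>b. h (\<lambda>i. a i + b i))))"
  proof (rule expectation_cong_pmf)
    fix k assume k: "k \<in> set_pmf (f n)"
    have "E (resample l k \<bind> (\<lambda>a. map_pmf (\<lambda>b i. a i + b i) (resample r (n - k)))) h =
        E (resample l k) (\<lambda>a. E (map_pmf (\<lambda>b i. a i + b i) (resample r (n - k))) h)"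
      using adm[OF k] by (intro expectation_bind_pmf_finite) (auto intro: finite_set_pmf_resample)
    then show "E (resample l k \<bind> (\<lambda>a. map_pmf (\<lambda>b i. a i + b i) (resample r (n - k)))) h =
        E (resample l k) (\<lambda>a. E (resample r (n - k)) (\<lambda>b. h (\<lambda>i. a i + b i)))"
      by simp
  qed
  finally show ?thesis .
qed

definition resample_mgf :: "real \<Rightarrow> nat set \<Rightarrow> rtree \<Rightarrow> nat \<Rightarrow> real" where
  "resample_mgf \<theta> B s n = E (resample s n) (\<lambda>Nv. exp (\<theta> * (\<Sum>j\<in>B. real (Nv j))))"

definition resample_mean :: "nat set \<Rightarrow> rtree \<Rightarrow> nat \<Rightarrow> real" where
  "resample_mean B s n = E (resample s n) (\<lambda>Nv. \<Sum>j\<in>B. real (Nv j))"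

lemma resample_mgf_nonneg: "0 \<le> resample_mgf \<theta> B s n"
  unfolding resample_mgf_def by (intro integral_nonneg_AE) auto

lemma resample_mgf_zero: "resample_mgf 0 B s n = 1"
  by (simp add: resample_mgf_def)

lemma sum_indicator_Leaf:
  "finite B \<Longrightarrow> (\<Sum>i\<in>B. real (if i = j then n else 0)) = (if j \<in> B then real n else 0)"
  by (simp add: if_distrib[of real] sum.delta cong: if_cong)

lemma resample_mgf_Leaf:
  "finite B \<Longrightarrow> resample_mgf \<theta> B (Leaf j) n = exp (\<theta> * (if j \<in> B then real n else 0))"
  by (simp add: resample_mgf_def sum_indicator_Leaf)

lemma resample_mean_Leaf:
  "finite B \<Longrightarrow> resample_mean B (Leaf j) n = (if j \<in> B then real n else 0)"
  by (simp add: resample_mean_def sum_indicator_Leaf)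

lemma resample_mgf_Node:
  assumes "admissible N p (Node f l r) n"
  shows "resample_mgf \<theta> B (Node f l r) n =
    E (f n) (\<lambda>k. resample_mgf \<theta> B l k * resample_mgf \<theta> B r (n - k))"
  unfolding resample_mgf_def expectation_resample_Node[OF assms]
  by (simp add: sum.distrib distrib_left exp_add)

lemma resample_mean_Node:
  assumes "admissible N p (Node f l r) n"
  shows "resample_mean B (Node f l r) n = E (f n) (\<lambda>k. resample_mean B l k + resample_mean B r (n - k))"
  unfolding resample_mean_def expectation_resample_Node[OF assms]
proof (rule expectation_cong_pmf)
  fix k assume "k \<in> set_pmf (f n)"
  then have "finite (set_pmf (resample l k))" "finite (set_pmf (resample r (n - k)))"
    using assms by (auto intro: finite_set_pmf_resample)
  then show "E (resample l k) (\<lambda>a. E (resample r (n - k)) (\<lambda>b. \<Sum>j\<in>B. real (a j + b j))) =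
      E (resample l k) (\<lambda>Nv. \<Sum>j\<in>B. real (Nv j)) + E (resample r (n - k)) (\<lambda>Nv. \<Sum>j\<in>B. real (Nv j))"
    by (simp add: sum.distrib integrable_measure_pmf_finite)
qed

lemma resample_mgf_mono:
  assumes "finite B"
  shows "admissible N p s x \<Longrightarrow> admissible N p s y \<Longrightarrow> x \<le> y \<Longrightarrow>
    0 \<le> \<theta> * (resample_mgf \<theta> B s y - resample_mgf \<theta> B s x)"
proof (induction s arbitrary: x y)
  case (Leaf j)
  have "0 \<le> \<theta> * (exp (\<theta> * real y) - exp (\<theta> * real x))"
  proof (cases "0 \<le> \<theta>")
    case True
    then have "\<theta> * real x \<le> \<theta> * real y" using Leaf.prems(3) by (simp add: mult_left_mono)
    then show ?thesis using True by simp
  next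
    case False
    then have "\<theta> * real y \<le> \<theta> * real x" using Leaf.prems(3) by (simp add: mult_left_mono_neg)
    then show ?thesis using False by (simp add: mult_nonpos_nonpos)
  qed
  then show ?case using assms by (simp add: resample_mgf_Leaf)
next
  case (Node f l r)
  let ?G = "resample_mgf \<theta> B"
  show ?case
  proof (cases "x = y")
    case False
    then have y: "y = Suc x"
      using admissible_range[OF Node.prems(1)] admissible_range[OF Node.prems(2)] Node.prems(3) by auto
    have "0 \<le> \<theta> * (?G l k' * ?G r (y - k') - ?G l k * ?G r (x - k))"
      if k: "k \<in> set_pmf (f x)" and k': "k' \<in> set_pmf (f y)" for k k'
    proof -
      have adm: "admissible N p l k" "admissible N p r (x - k)" "k \<le> x"
        and adm': "admissible N p l k'" "admissible N p r (y - k')" "k' \<le> y"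
        using Node.prems(1,2) k k' by auto
      have "k \<le> k'" "x - k \<le> y - k'"
        using admissible_range[OF adm(1)] admissible_range[OF adm(2)]
          admissible_range[OF adm'(1)] admissible_range[OF adm'(2)] adm(3) adm'(3) y
        by auto
      then have "0 \<le> \<theta> * (?G l k' - ?G l k)" "0 \<le> \<theta> * (?G r (y - k') - ?G r (x - k))"
        using Node.IH(1)[OF adm(1) adm'(1)] Node.IH(2)[OF adm(2) adm'(2)] by auto
      moreover have "\<theta> * (?G l k' * ?G r (y - k') - ?G l k * ?G r (x - k)) =
          \<theta> * (?G l k' - ?G l k) * ?G r (y - k') + ?G l k * (\<theta> * (?G r (y - k') - ?G r (x - k)))"
        by (simp add: algebra_simps)
      ultimately show ?thesis by (simp add: resample_mgf_nonneg)
    qed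
    then show ?thesis
      unfolding resample_mgf_Node[OF Node.prems(1)] resample_mgf_Node[OF Node.prems(2)]
      using finite_set_pmf_split[OF Node.prems(1)] finite_set_pmf_split[OF Node.prems(2)]
      by (intro mult_diff_expectation_nonneg)
  qed simp
qed

definition child_counts :: "nat pmf \<Rightarrow> (nat \<Rightarrow> nat pmf) \<Rightarrow> (nat \<times> nat) pmf" where
  "child_counts D f = D \<bind> (\<lambda>n. map_pmf (\<lambda>k. (k, n - k)) (f n))"

lemma admissible_child_counts:
  assumes "\<And>n. n \<in> set_pmf D \<Longrightarrow> admissible N p (Node f l r) n"
    and "(a, b) \<in> set_pmf (child_counts D f)"
  shows "admissible N p l a" "admissible N p r b"
    "a + b \<in> {mu_floor N p (Node f l r), mu_floor N p (Node f l r) + 1}"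
proof -
  obtain n where "n \<in> set_pmf D" "a \<in> set_pmf (f n)" "b = n - a"
    using assms(2) by (auto simp: child_counts_def set_bind_pmf)
  with assms(1)[of n] show "admissible N p l a" "admissible N p r b"
    "a + b \<in> {mu_floor N p (Node f l r), mu_floor N p (Node f l r) + 1}"
    by auto
qed

lemma finite_set_pmf_child_counts:
  assumes "\<And>n. n \<in> set_pmf D \<Longrightarrow> admissible N p (Node f l r) n"
  shows "finite (set_pmf D)" "n \<in> set_pmf D \<Longrightarrow> finite (set_pmf (f n))"
    "finite (set_pmf (child_counts D f))"
proof -
  show finite_D: "finite (set_pmf D)" using assms by (rule finite_set_pmf_if_admissible)
  show finite_f: "finite (set_pmf (f n))" if "n \<in> set_pmf D" for n
    using assms[OF that] by (rule finite_set_pmf_split)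
  show "finite (set_pmf (child_counts D f))"
    unfolding child_counts_def using finite_D finite_f by (intro finite_set_bind_pmf) auto
qed

lemma expectation_child_counts:
  assumes "\<And>n. n \<in> set_pmf D \<Longrightarrow> admissible N p (Node f l r) n"
  shows "E (child_counts D f) u = E D (\<lambda>n. E (f n) (\<lambda>k. u (k, n - k)))"
  unfolding child_counts_def using finite_set_pmf_child_counts[OF assms]
  by (subst expectation_bind_pmf_finite) auto

lemma resample_mgf_child_counts_le:
  assumes "finite B" and adm: "\<And>n. n \<in> set_pmf D \<Longrightarrow> admissible N p (Node f l r) n"
  shows "E D (resample_mgf \<theta> B (Node f l r)) \<le>
    E (map_pmf fst (child_counts D f)) (resample_mgf \<theta> B l) *
    E (map_pmf snd (child_counts D f)) (resample_mgf \<theta> B r)"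
proof -
  let ?G = "resample_mgf \<theta> B" and ?J = "child_counts D f"
  define a b where "a = mu_floor N p l" and "b = mu_floor N p r"
  note adm_J = admissible_child_counts[where D = D, OF adm]
  have "E D (?G (Node f l r)) = E D (\<lambda>n. E (f n) (\<lambda>k. ?G l k * ?G r (n - k)))"
    using adm by (intro expectation_cong_pmf) (rule resample_mgf_Node)
  also have "\<dots> = E ?J (\<lambda>q. ?G l (fst q) * ?G r (snd q))"
    by (simp add: expectation_child_counts[OF adm])
  also have "\<dots> \<le> E ?J (\<lambda>q. ?G l (fst q)) * E ?J (\<lambda>q. ?G r (snd q))"
  proof (rule expectation_mult_le_two_by_two[where x = a and x' = "Suc a" and y = b and y' = "Suc b"])
    show "set_pmf ?J \<subseteq> {a, Suc a} \<times> {b, Suc b}"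
      using admissible_range[OF adm_J(1)] admissible_range[OF adm_J(2)] by (force simp: a_def b_def)
    show "(a, b) \<notin> set_pmf ?J \<or> (Suc a, Suc b) \<notin> set_pmf ?J"
      using adm_J(3)[where a = a and b = b] adm_J(3)[where a = "Suc a" and b = "Suc b"] by auto
    assume "(Suc a, b) \<in> set_pmf ?J" "(a, Suc b) \<in> set_pmf ?J"
    then have "0 \<le> \<theta> * (?G l (Suc a) - ?G l a)" "0 \<le> \<theta> * (?G r (Suc b) - ?G r b)"
      using adm_J(1,2) by (auto intro!: resample_mgf_mono[OF assms(1)])
    then show "0 \<le> (?G l (Suc a) - ?G l a) * (?G r (Suc b) - ?G r b)"
      by (cases "\<theta> = 0") (auto simp: resample_mgf_zero zero_le_mult_iff)
  qed simp_all
  finally show ?thesis by simp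
qed

lemma resample_mean_child_counts:
  assumes adm: "\<And>n. n \<in> set_pmf D \<Longrightarrow> admissible N p (Node f l r) n"
  shows "E D (resample_mean B (Node f l r)) =
    E (map_pmf fst (child_counts D f)) (resample_mean B l) +
    E (map_pmf snd (child_counts D f)) (resample_mean B r)"
proof -
  have "E D (resample_mean B (Node f l r)) =
      E D (\<lambda>n. E (f n) (\<lambda>k. resample_mean B l k + resample_mean B r (n - k)))"
    using adm by (intro expectation_cong_pmf) (rule resample_mean_Node)
  also have "\<dots> = E (child_counts D f) (\<lambda>q. resample_mean B l (fst q) + resample_mean B r (snd q))"
    by (simp add: expectation_child_counts[OF adm])
  also have "\<dots> = E (child_counts D f) (\<lambda>q. resample_mean B l (fst q)) +
      E (child_counts D f) (\<lambda>q. resample_mean B r (snd q))"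
    using finite_set_pmf_child_counts(3)[OF adm] by (simp add: integrable_measure_pmf_finite)
  finally show ?thesis by simp
qed

lemma resample_mgf_bound:
  assumes "finite B"
  shows "distinct (leaves s) \<Longrightarrow> (\<And>n. n \<in> set_pmf D \<Longrightarrow> admissible N p s n) \<Longrightarrow>
    E D (resample_mgf \<theta> B s) \<le>
      exp (\<theta> * E D (resample_mean B s) + \<theta>\<^sup>2 / 8 * card (B \<inter> set (leaves s)))"
proof (induction s arbitrary: D)
  case (Leaf j)
  show ?case
  proof (cases "j \<in> B")
    case True
    have "resample_mgf \<theta> B (Leaf j) = (\<lambda>n. exp (\<theta> * real n))" "resample_mean B (Leaf j) = real"
      using True assms by (auto simp: resample_mgf_Leaf resample_mean_Leaf)
    moreover have "E D (\<lambda>n. exp (\<theta> * real n)) \<le>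
        exp (\<theta> * E D real + \<theta>\<^sup>2 * (real (mu_floor N p (Leaf j) + 1) - real (mu_floor N p (Leaf j)))\<^sup>2 / 8)"
    proof (rule Hoeffding_lemma_pmf)
      show "finite (set_pmf D)" using Leaf.prems(2) by (rule finite_set_pmf_if_admissible)
      show "real n \<in> {real (mu_floor N p (Leaf j)) .. real (mu_floor N p (Leaf j) + 1)}" if "n \<in> set_pmf D" for n
        using admissible_range[OF Leaf.prems(2)[OF that]] by auto
    qed
    ultimately show ?thesis using True by simp
  next
    case False
    then have "resample_mgf \<theta> B (Leaf j) = (\<lambda>n. 1)" "resample_mean B (Leaf j) = (\<lambda>n. 0)"
      using assms by (auto simp: resample_mgf_Leaf resample_mean_Leaf)
    then show ?thesis using False by simp
  qed
next
  case (Node f l r)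
  let ?Dl = "map_pmf fst (child_counts D f)" and ?Dr = "map_pmf snd (child_counts D f)"
  let ?c = "\<lambda>s. real (card (B \<inter> set (leaves s)))"
  have adm_l: "\<And>a. a \<in> set_pmf ?Dl \<Longrightarrow> admissible N p l a"
    and adm_r: "\<And>b. b \<in> set_pmf ?Dr \<Longrightarrow> admissible N p r b"
    using admissible_child_counts[OF Node.prems(2)] by force+
  have "?c (Node f l r) = ?c l + ?c r"
    using Node.prems(1) assms by (simp add: Int_Un_distrib card_Un_disjoint disjoint_iff)
  moreover have "E D (resample_mgf \<theta> B (Node f l r)) \<le>
      exp (\<theta> * E ?Dl (resample_mean B l) + \<theta>\<^sup>2 / 8 * ?c l) *
      exp (\<theta> * E ?Dr (resample_mean B r) + \<theta>\<^sup>2 / 8 * ?c r)"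
    using Node.prems(1) assms
    by (intro order.trans[OF resample_mgf_child_counts_le[OF assms Node.prems(2)]] mult_mono
        Node.IH adm_l adm_r integral_nonneg_AE AE_pmfI resample_mgf_nonneg) auto
  ultimately show ?case
    by (simp add: resample_mean_child_counts[OF Node.prems(2)] exp_add[symmetric] algebra_simps)
qed

lemma resample_centered_mgf_le:
  assumes "distinct (leaves t)" "admissible N p t n" "B \<subseteq> set (leaves t)"
    and means: "\<And>j. j \<in> B \<Longrightarrow> E (resample t n) (\<lambda>Nv. real (Nv j)) = m j"
  shows "E (resample t n) (\<lambda>Nv. exp (\<theta> * (\<Sum>j\<in>B. real (Nv j) - m j))) \<le> exp (\<theta>\<^sup>2 * card B / 8)"
proof -
  have finite_B: "finite B" using assms(3) finite_subset by blast
  define S where "S = (\<Sum>j\<in>B. m j)"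
  have "resample_mean B t n = S"
    unfolding resample_mean_def S_def using means finite_set_pmf_resample[OF assms(2)]
    by (simp add: Bochner_Integration.integral_sum integrable_measure_pmf_finite)
  then have bound: "resample_mgf \<theta> B t n \<le> exp (\<theta> * S + \<theta>\<^sup>2 / 8 * card B)"
    using resample_mgf_bound[OF finite_B assms(1), of "return_pmf n"] assms(2,3)
    by (simp add: Int_absorb2)
  have "E (resample t n) (\<lambda>Nv. exp (\<theta> * (\<Sum>j\<in>B. real (Nv j) - m j))) =
      E (resample t n) (\<lambda>Nv. exp (\<theta> * (\<Sum>j\<in>B. real (Nv j))) * exp (- \<theta> * S))"
    by (simp add: S_def sum_subtractf right_diff_distrib exp_diff exp_minus field_simps)
  also have "\<dots> = resample_mgf \<theta> B t n * exp (- \<theta> * S)"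
    by (simp add: resample_mgf_def)
  also have "\<dots> \<le> exp (\<theta> * S + \<theta>\<^sup>2 / 8 * card B) * exp (- \<theta> * S)"
    using bound by (rule mult_right_mono) simp
  also have "\<dots> = exp (\<theta>\<^sup>2 * card B / 8)"
    by (simp add: exp_add[symmetric])
  finally show ?thesis .
qed

lemma prob_abs_centered_sum_le:
  assumes "distinct (leaves t)" "admissible N p t n" "B \<subseteq> set (leaves t)"
    and means: "\<And>j. j \<in> B \<Longrightarrow> E (resample t n) (\<lambda>Nv. real (Nv j)) = m j"
    and card_B: "2 * card B \<le> R" and \<epsilon>: "\<epsilon> > 0"
  shows "measure_pmf.prob (resample t n) {Nv. \<epsilon> \<le> \<bar>\<Sum>j\<in>B. real (Nv j) - m j\<bar>}
    \<le> 2 * exp (- 4 * \<epsilon>\<^sup>2 / R)"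
proof (cases "B = {}")
  case False
  then have B: "real (card B) > 0" using assms(3) finite_subset by fastforce
  have "measure_pmf.prob (resample t n) {Nv. \<epsilon> \<le> \<bar>\<Sum>j\<in>B. real (Nv j) - m j\<bar>}
      \<le> 2 * exp (- 2 * \<epsilon>\<^sup>2 / card B)"
    using assms(2) by (intro prob_abs_ge_le_of_mgf_le[OF _ B \<epsilon>] resample_centered_mgf_le[OF assms(1-4)]
        finite_set_pmf_resample)
  also have "\<dots> \<le> 2 * exp (- 4 * \<epsilon>\<^sup>2 / R)"
    using B card_B \<epsilon> by (simp add: frac_le field_simps)
  finally show ?thesis .
qed (use \<epsilon> in simp)

lemma resample_root_conserved:
  assumes p_sum: "(\<Sum>j\<in>set (leaves t). p j) = 1"
    and range: "\<And>Nv. Nv \<in> set_pmf (resample t N) \<Longrightarrow>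
      (\<Sum>j\<in>set (leaves t). Nv j) \<in> {nat \<lfloor>mu N p t\<rfloor>, nat \<lfloor>mu N p t\<rfloor> + 1}"
    and mean: "E (resample t N) (\<lambda>Nv. real (\<Sum>j\<in>set (leaves t). Nv j)) = mu N p t"
    and Nv: "Nv \<in> set_pmf (resample t N)"
  shows "(\<Sum>j\<in>set (leaves t). Nv j) = N"
proof -
  have mu_t: "mu N p t = real N" using p_sum by (simp add: mu_def)
  have "real (\<Sum>j\<in>set (leaves t). Nv j) = real N"
  proof (rule eq_lower_bound_if_expectation_eq[OF _ _ Nv])
    show "real (\<Sum>j\<in>set (leaves t). Nv' j) \<in> {real N..real N + 1}"
      if "Nv' \<in> set_pmf (resample t N)" for Nv'
      using range[OF that] unfolding mu_t by fastforce
    show "E (resample t N) (\<lambda>Nv. real (\<Sum>j\<in>set (leaves t). Nv j)) = real N"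
      using mean unfolding mu_t .
  qed
  then show ?thesis by (simp only: of_nat_eq_iff)
qed

theorem lemma5:
  fixes t :: rtree and R N :: nat and p :: "nat \<Rightarrow> real"
  assumes distinct: "distinct (leaves t)"
    and labels: "set (leaves t) = {1..R}"
    and p_nonneg: "\<forall>j\<in>{1..R}. p j \<ge> 0"
    and p_sum: "(\<Sum>j=1..R. p j) = 1"
    and splits: "\<forall>f l r n. Node f l r \<in> subtrees t \<longrightarrow>
        n \<in> {nat \<lfloor>mu N p (Node f l r)\<rfloor>, nat \<lfloor>mu N p (Node f l r)\<rfloor> + 1} \<longrightarrow>
        card (set_pmf (f n)) \<le> 2 \<and> (\<forall>k\<in>set_pmf (f n). k \<le> n)"
    and counts: "\<forall>s\<in>subtrees t.
        (\<forall>Nv\<in>set_pmf (resample t N).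
           (\<Sum>j\<in>set (leaves s). Nv j) \<in> {nat \<lfloor>mu N p s\<rfloor>, nat \<lfloor>mu N p s\<rfloor> + 1}) \<and>
        measure_pmf.expectation (resample t N) (\<lambda>Nv. real (\<Sum>j\<in>set (leaves s). Nv j))
          = mu N p s"
  shows "\<forall>\<epsilon>>0. \<forall>A\<subseteq>{1..R}.
    measure_pmf.prob (resample t N)
      {Nv. \<bar>\<Sum>j\<in>A. (real (Nv j) - real N * p j)\<bar> \<ge> \<epsilon>}
    \<le> 2 * exp (- 4 * \<epsilon>\<^sup>2 / real R)"
proof (intro allI impI)
  fix \<epsilon> :: real and A :: "nat set"
  assume \<epsilon>: "\<epsilon> > 0" and A: "A \<subseteq> {1..R}"
  let ?P = "resample t N" and ?L = "set (leaves t)" and ?x = "\<lambda>Nv j. real (Nv j) - real N * p j"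
  have p_sum': "(\<Sum>j\<in>?L. p j) = 1" using labels p_sum by simp
  have total: "(\<Sum>j\<in>?L. Nv j) = N" if "Nv \<in> set_pmf ?P" for Nv
    using bspec[OF counts subtrees_refl[of t]] that by (intro resample_root_conserved[OF p_sum']) auto
  have adm: "admissible N p t N"
    using distinct total counts by (intro admissible_if_conserving) (auto simp: counts_bounded_def mu_floor_def)
  have means: "E ?P (\<lambda>Nv. real (Nv j)) = real N * p j" if "j \<in> ?L" for j
    using counts Leaf_in_subtrees[OF that] by (force simp: mu_def)
  have centred_sum: "(\<Sum>j\<in>?L. ?x Nv j) = 0" if "Nv \<in> set_pmf ?P" for Nv
    using total[OF that] p_sum' by (simp add: sum_subtractf sum_distrib_left[symmetric] flip: of_nat_sum)
  obtain B where B: "B \<in> {A, ?L - A}" "2 * card B \<le> R"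
    using small_side_exists[of ?L A] A labels by auto
  have "measure_pmf.prob ?P {Nv. \<epsilon> \<le> \<bar>\<Sum>j\<in>A. ?x Nv j\<bar>} =
      measure_pmf.prob ?P {Nv. \<epsilon> \<le> \<bar>\<Sum>j\<in>B. ?x Nv j\<bar>}"
    using B(1) A labels centred_sum abs_sum_eq_abs_sum_compl[of ?L A]
    by (intro measure_eq_AE AE_pmfI) auto
  also have "\<dots> \<le> 2 * exp (- 4 * \<epsilon>\<^sup>2 / R)"
    using B A labels means by (intro prob_abs_centered_sum_le[OF distinct adm] \<epsilon>) auto
  finally show "measure_pmf.prob ?P {Nv. \<bar>\<Sum>j\<in>A. ?x Nv j\<bar> \<ge> \<epsilon>} \<le> 2 * exp (- 4 * \<epsilon>\<^sup>2 / R)" .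
qed

end
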